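(* A function $a\in C^2([-\pi,\pi])$ satisfies $\int_{-\pi}^\pi a(x)dx=0$ and solves $$\Big(\int_{-\pi}^x a(\bar x)\,d\bar x\Big)a'(x)-a(x)^2+\frac1\pi\int_{-\pi}^\pi a^2(\bar x)\,d\bar x=0\quad\text{for all }x\in[-\pi,\pi]$$ if and only if either $a=\mu\cos(kx)$ for some $\mu\in\mathbb R$ and integer $k\ge1$, or $a=\mu\sin\big(\tfrac{2k+1}{2}x\big)$ for some $\mu\in\mathbb R$ and integer $k\ge0$. *)

theory Defs
  imports "HOL-Analysis.Analysis"
begin

text \<open>Twice continuously differentiable on a set S, with derivatives taken within S
  (one-sided at the endpoints of a closed interval).\<close>
definition C2_on :: "real set \<Rightarrow> (real \<Rightarrow> real) \<Rightarrow> bool" where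
  "C2_on S f \<longleftrightarrow> (\<exists>f' f''.
      (\<forall>x\<in>S. (f has_real_derivative f' x) (at x within S)) \<and>
      (\<forall>x\<in>S. (f' has_real_derivative f'' x) (at x within S)) \<and>
      continuous_on S f'')"

end

theory Submission
  imports Defs
begin

(* Let A(x) be the integral of a over [-pi, x] and c = (1/pi) * integral of a^2, so that the
   equation reads A a' - a^2 + c = 0 with A(-pi) = A(pi) = 0. At x = -pi it gives c = a(-pi)^2,
   and c = 0 forces a = 0. If c > 0, then A and a = A' never vanish together, and differentiating
   the equation gives the vanishing Wronskian A a'' - a a' = 0, so a' = L A for a constant L:
   A solves A'' = L A. By Rolle's theorem a vanishes somewhere, where L A^2 = -c; hence
   L = -w^2 < 0 and a(x) = a(-pi) cos (w (x + pi)), and A(pi) = 0 forces sin (2 pi w) = 0,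
   i.e. 2 w is a positive integer. Even and odd values of 2 w give the cosine and the sine
   family. Conversely, for each g in these families the antiderivative G vanishing at -pi
   satisfies G(pi) = 0 and G g' - g^2 = -1, and the equation for mu g follows. *)

lemma has_real_derivative_unique_Icc:
  assumes "s < t" "x \<in> {s..t}"
    and "(f has_real_derivative d1) (at x within {s..t})"
    and "(f has_real_derivative d2) (at x within {s..t})"
  shows "d1 = d2"
  using assms vector_derivative_unique_within_closed_interval[of s t x f d1 d2]
  by (simp add: has_real_derivative_iff_has_vector_derivative)

lemma has_integral_antiderivative_Icc:
  assumes G: "\<And>y. y \<in> {s..t} \<Longrightarrow> (G has_real_derivative g y) (at y within {s..t})"
    and x: "x \<in> {s..t}"
  shows "(g has_integral G x - G s) {s..x}"
proof (rule fundamental_theorem_of_calculus)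
  show "s \<le> x" using x by simp
next
  fix y assume y: "y \<in> {s..x}"
  have "(G has_real_derivative g y) (at y within {s..x})"
    by (rule DERIV_subset[OF G]) (use x y in auto)
  then show "(G has_vector_derivative g y) (at y within {s..x})"
    by (simp add: has_real_derivative_iff_has_vector_derivative)
qed

lemma C2_on_Icc_second_derivative:
  assumes "s < t" "C2_on {s..t} f"
    and f': "\<And>x. x \<in> {s..t} \<Longrightarrow> (f has_real_derivative f' x) (at x within {s..t})"
  obtains f'' where "\<And>x. x \<in> {s..t} \<Longrightarrow> (f' has_real_derivative f'' x) (at x within {s..t})"
    and "continuous_on {s..t} f''"
proof -
  obtain g' g'' where g': "\<forall>x\<in>{s..t}. (f has_real_derivative g' x) (at x within {s..t})"
    and g'': "\<forall>x\<in>{s..t}. (g' has_real_derivative g'' x) (at x within {s..t})"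
    and "continuous_on {s..t} g''"
    using \<open>C2_on {s..t} f\<close> unfolding C2_on_def by blast
  have f'_eq: "f' x = g' x" if "x \<in> {s..t}" for x
    using has_real_derivative_unique_Icc[OF \<open>s < t\<close> that f'[OF that]] g' that by blast
  have "(f' has_real_derivative g'' x) (at x within {s..t})" if "x \<in> {s..t}" for x
    by (rule has_field_derivative_transform_within[OF g''[rule_format, OF that] zero_less_one that])
      (simp add: f'_eq)
  then show ?thesis using \<open>continuous_on {s..t} g''\<close> by (rule that)
qed

lemma finite_simple_zeros:
  fixes f f' :: "real \<Rightarrow> real"
  assumes "compact S"
    and f': "\<And>x. x \<in> S \<Longrightarrow> (f has_real_derivative f' x) (at x within S)"
    and simple: "\<And>x. x \<in> S \<Longrightarrow> f x = 0 \<Longrightarrow> f' x \<noteq> 0"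
  shows "finite {x\<in>S. f x = 0}"
proof -
  let ?Z = "{x\<in>S. f x = 0}"
  have "closed ?Z"
    by (intro continuous_closed_preimage_constant DERIV_continuous_on[OF f'] compact_imp_closed
        \<open>compact S\<close>)
  have "\<not> z islimpt ?Z" if "z \<in> S" for z
  proof
    assume "z islimpt ?Z"
    with \<open>closed ?Z\<close> have "z \<in> ?Z" using closed_limpt by blast
    then have z: "z \<in> S" "f z = 0" by simp_all
    have "((\<lambda>y. (f y - f z) / (y - z)) \<longlongrightarrow> f' z) (at z within S)"
      using f'[OF z(1)] by (simp add: has_field_derivative_iff)
    then have "\<forall>\<^sub>F y in at z within S. (f y - f z) / (y - z) \<noteq> 0"
      using simple[OF z] by (rule tendsto_imp_eventually_ne)
    then obtain d where "d > 0"
      and d: "\<forall>y\<in>S. y \<noteq> z \<and> dist y z < d \<longrightarrow> (f y - f z) / (y - z) \<noteq> 0"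
      unfolding eventually_at by blast
    obtain y where "y \<in> ?Z" "y \<noteq> z" "dist y z < d"
      using \<open>z islimpt ?Z\<close> \<open>d > 0\<close> unfolding islimpt_approachable by blast
    with d z(2) show False by auto
  qed
  then have "finite (S \<inter> ?Z)"
    by (rule finite_not_islimpt_in_compact[OF \<open>compact S\<close>])
  moreover have "S \<inter> ?Z = ?Z" by blast
  ultimately show ?thesis by simp
qed

lemma harmonic_oscillator_Icc:
  fixes u v :: "real \<Rightarrow> real"
  assumes u: "\<And>x. x \<in> {s..t} \<Longrightarrow> (u has_real_derivative v x) (at x within {s..t})"
    and v: "\<And>x. x \<in> {s..t} \<Longrightarrow> (v has_real_derivative - (w\<^sup>2 * u x)) (at x within {s..t})"
    and x: "x \<in> {s..t}"
  shows "v x = v s * cos (w * (x - s)) - w * u s * sin (w * (x - s))"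
    and "w * u x = w * u s * cos (w * (x - s)) + v s * sin (w * (x - s))"
proof -
  \<comment> \<open>\<open>(P y, Q y)\<close> is \<open>(v y, w * u y)\<close> rotated by the angle \<open>- w * (y - s)\<close>; it is conserved.\<close>
  define P where "P y = w * u y * sin (w * (y - s)) + v y * cos (w * (y - s))" for y
  define Q where "Q y = w * u y * cos (w * (y - s)) - v y * sin (w * (y - s))" for y
  have "(P has_real_derivative 0) (at y within {s..t})"
    and "(Q has_real_derivative 0) (at y within {s..t})" if "y \<in> {s..t}" for y
    unfolding P_def Q_def using u[OF that] v[OF that]
    by (auto intro!: derivative_eq_intros simp: algebra_simps power2_eq_square)
  then obtain cP cQ where "\<forall>y\<in>{s..t}. P y = cP" "\<forall>y\<in>{s..t}. Q y = cQ"
    using has_field_derivative_zero_constant[OF convex_real_interval(5)] by metis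
  moreover have "s \<in> {s..t}" using x by simp
  ultimately have "P x = P s" "Q x = Q s" using x by auto
  then have PQ: "P x = v s" "Q x = w * u s" by (simp_all add: P_def Q_def)
  let ?\<theta> = "w * (x - s)"
  have "P x * cos ?\<theta> - Q x * sin ?\<theta> = v x * ((sin ?\<theta>)\<^sup>2 + (cos ?\<theta>)\<^sup>2)"
    and "P x * sin ?\<theta> + Q x * cos ?\<theta> = w * u x * ((sin ?\<theta>)\<^sup>2 + (cos ?\<theta>)\<^sup>2)"
    unfolding P_def Q_def
    by (simp_all only: power2_eq_square ring_distribs) (simp_all only: algebra_simps)
  then show "v x = v s * cos ?\<theta> - w * u s * sin ?\<theta>"
    and "w * u x = w * u s * cos ?\<theta> + v s * sin ?\<theta>"
    by (simp_all add: PQ)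
qed

lemma wronskian_zero_if_first_integral:
  fixes u v p q :: "real \<Rightarrow> real"
  assumes "s < t"
    and u: "\<And>x. x \<in> {s..t} \<Longrightarrow> (u has_real_derivative v x) (at x within {s..t})"
    and v: "\<And>x. x \<in> {s..t} \<Longrightarrow> (v has_real_derivative p x) (at x within {s..t})"
    and p: "\<And>x. x \<in> {s..t} \<Longrightarrow> (p has_real_derivative q x) (at x within {s..t})"
    and first_integral: "\<And>x. x \<in> {s..t} \<Longrightarrow> u x * p x - (v x)\<^sup>2 + c = 0"
    and x: "x \<in> {s..t}"
  shows "u x * q x = v x * p x"
proof -
  have "((\<lambda>y. u y * p y - (v y)\<^sup>2 + c) has_real_derivative u x * q x - v x * p x)
      (at x within {s..t})"
    using u[OF x] v[OF x] p[OF x]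
    by (auto intro!: derivative_eq_intros simp: power2_eq_square algebra_simps)
  then have "((\<lambda>y. 0) has_real_derivative u x * q x - v x * p x) (at x within {s..t})"
    by (rule has_field_derivative_transform_within[OF _ zero_less_one x]) (simp add: first_integral)
  then have "u x * q x - v x * p x = 0"
    using has_real_derivative_unique_Icc[OF \<open>s < t\<close> x] DERIV_const by blast
  then show ?thesis by simp
qed

lemma wronskian_zero_imp_proportional:
  fixes u u' v v' :: "real \<Rightarrow> real"
  assumes u: "\<And>x. x \<in> {s..t} \<Longrightarrow> (u has_real_derivative u' x) (at x within {s..t})"
    and v: "\<And>x. x \<in> {s..t} \<Longrightarrow> (v has_real_derivative v' x) (at x within {s..t})"
    and "continuous_on {s..t} u'" "continuous_on {s..t} v'"
    and wronskian: "\<And>x. x \<in> {s..t} \<Longrightarrow> u x * v' x = u' x * v x"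
    and no_common_zero: "\<And>x. x \<in> {s..t} \<Longrightarrow> u x \<noteq> 0 \<or> u' x \<noteq> 0"
  obtains L where "\<And>x. x \<in> {s..t} \<Longrightarrow> v x = L * u x"
proof -
  \<comment> \<open>\<open>q\<close> is \<open>v / u\<close> where \<open>u \<noteq> 0\<close> and \<open>v' / u'\<close> where \<open>u' \<noteq> 0\<close>: it is
    continuous, and locally constant away from the finitely many (simple) zeros of \<open>u\<close>.\<close>
  define q where "q x = (u x * v x + u' x * v' x) / ((u x)\<^sup>2 + (u' x)\<^sup>2)" for x
  have pos: "(u x)\<^sup>2 + (u' x)\<^sup>2 > 0" if "x \<in> {s..t}" for x
    using no_common_zero[OF that] by (simp add: sum_power2_gt_zero_iff)
  have v_eq: "v x = q x * u x" if "x \<in> {s..t}" for x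
  proof -
    have "v x * ((u x)\<^sup>2 + (u' x)\<^sup>2) = u x * u x * v x + u' x * (u' x * v x)"
      by (simp add: power2_eq_square algebra_simps)
    also have "\<dots> = u x * u x * v x + u' x * (u x * v' x)" by (simp only: wronskian[OF that])
    also have "\<dots> = (u x * v x + u' x * v' x) * u x" by (simp add: algebra_simps)
    finally show ?thesis using pos[OF that] by (auto simp: q_def eq_divide_eq)
  qed
  have "continuous_on {s..t} q"
    unfolding q_def using pos
    by (intro continuous_intros DERIV_continuous_on[OF u] DERIV_continuous_on[OF v] assms)
      (metis order_less_irrefl)+
  moreover have "finite {x\<in>{s..t}. u x = 0}"
    using no_common_zero by (intro finite_simple_zeros[OF compact_Icc u]) auto
  moreover have "(q has_derivative (\<lambda>h. 0)) (at x within {s..t})"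
    if "x \<in> {s..t} - {x\<in>{s..t}. u x = 0}" for x
  proof -
    from that have x: "x \<in> {s..t}" "u x \<noteq> 0" by auto
    have "v' x * u x - v x * u' x = 0"
      using wronskian[OF x(1)] by (metis mult.commute right_minus_eq)
    then have quotient: "((\<lambda>y. v y / u y) has_real_derivative 0) (at x within {s..t})"
      using DERIV_divide[OF v[OF x(1)] u[OF x(1)] x(2)] by simp
    have eventually_eq: "\<forall>\<^sub>F y in at x within {s..t}. v y / u y = q y"
    proof -
      have "\<forall>\<^sub>F y in at x within {s..t}. u y \<noteq> 0"
        using DERIV_continuous[OF u[OF x(1)]] x(2)
        by (simp add: continuous_within tendsto_imp_eventually_ne)
      moreover have "\<forall>\<^sub>F y in at x within {s..t}. y \<in> {s..t}"
        by (simp add: eventually_at_filter)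
      ultimately show ?thesis by eventually_elim (simp add: v_eq)
    qed
    have "v x / u x = q x" using v_eq[OF x(1)] x(2) by simp
    with quotient have "(q has_real_derivative 0) (at x within {s..t})"
      using has_field_derivative_cong_eventually[OF eventually_eq] by blast
    moreover have "(*) 0 = (\<lambda>h::real. 0)" by (rule ext) simp
    ultimately show ?thesis by (simp add: has_field_derivative_def)
  qed
  ultimately have q_const: "q x = q s" if "x \<in> {s..t}" for x
    using has_derivative_zero_unique_strong_interval that by blast
  show ?thesis by (rule that[of "q s"]) (metis v_eq q_const)
qed

lemma first_integral_imp_coeff_neg:
  fixes u v :: "real \<Rightarrow> real"
  assumes "s < t" "u s = u t"
    and u: "\<And>x. x \<in> {s..t} \<Longrightarrow> (u has_real_derivative v x) (at x within {s..t})"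
    and first_integral: "\<And>x. x \<in> {s..t} \<Longrightarrow> L * (u x)\<^sup>2 - (v x)\<^sup>2 + c = 0"
    and "c > 0"
  shows "L < 0"
proof -
  have "(u has_derivative (*) (v x)) (at x)" if "s < x" "x < t" for x
    using u[of x] that by (simp add: at_within_Icc_at has_field_derivative_def)
  then obtain \<xi> where \<xi>: "s < \<xi>" "\<xi> < t" "(*) (v \<xi>) = (\<lambda>_. 0)"
    using Rolle_deriv[of s t u "\<lambda>x. (*) (v x)"] \<open>s < t\<close> \<open>u s = u t\<close> DERIV_continuous_on[OF u]
    by blast
  have "v \<xi> = 0" using fun_cong[OF \<xi>(3), of 1] by simp
  then have "L * (u \<xi>)\<^sup>2 < 0"
    using first_integral[of \<xi>] \<open>s < \<xi>\<close> \<open>\<xi> < t\<close> \<open>c > 0\<close> by simp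
  then show "L < 0" by (simp add: mult_less_0_iff)
qed

definition integro_ode :: "(real \<Rightarrow> real) \<Rightarrow> (real \<Rightarrow> real) \<Rightarrow> bool" where
  "integro_ode a a' \<longleftrightarrow> integral {-pi..pi} a = 0 \<and>
     (\<forall>x\<in>{-pi..pi}. integral {-pi..x} a * a' x - (a x)^2
        + (1/pi) * integral {-pi..pi} (\<lambda>t. (a t)^2) = 0)"

lemma integro_ode_multiple:
  fixes a a' g g' G :: "real \<Rightarrow> real"
  assumes a': "\<forall>x\<in>{-pi..pi}. (a has_real_derivative a' x) (at x within {-pi..pi})"
    and a: "\<And>x. x \<in> {-pi..pi} \<Longrightarrow> a x = \<mu> * g x"
    and g': "\<And>x. x \<in> {-pi..pi} \<Longrightarrow> (g has_real_derivative g' x) (at x within {-pi..pi})"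
    and G: "\<And>x. x \<in> {-pi..pi} \<Longrightarrow> (G has_real_derivative g x) (at x within {-pi..pi})"
    and "G (-pi) = 0" "G pi = 0"
    and normalized: "\<And>x. x \<in> {-pi..pi} \<Longrightarrow> G x * g' x - (g x)\<^sup>2 = -1"
  shows "integro_ode a a'"
proof -
  have int_a: "integral {-pi..x} a = \<mu> * G x" if x: "x \<in> {-pi..pi}" for x
  proof -
    have "((\<lambda>t. \<mu> * g t) has_integral \<mu> * G x) {-pi..x}"
      using has_integral_mult_right[OF has_integral_antiderivative_Icc[OF G x]] \<open>G (-pi) = 0\<close>
      by simp
    then have "(a has_integral \<mu> * G x) {-pi..x}"
      by (rule has_integral_eq[rotated]) (use a x in auto)
    then show ?thesis by (rule integral_unique)
  qed
  have "((\<lambda>t. (G t * g t + t) / 2) has_real_derivative (g x)\<^sup>2) (at x within {-pi..pi})"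
    if "x \<in> {-pi..pi}" for x
  proof -
    have "((\<lambda>t. (G t * g t + t) / 2) has_real_derivative (g x * g x + G x * g' x + 1) / 2)
        (at x within {-pi..pi})"
      using G[OF that] g'[OF that] by (auto intro!: derivative_eq_intros)
    moreover have "(g x * g x + G x * g' x + 1) / 2 = (g x)\<^sup>2"
      using normalized[OF that] by (simp add: power2_eq_square field_simps)
    ultimately show ?thesis by simp
  qed
  then have "((\<lambda>t. (g t)\<^sup>2) has_integral (G pi * g pi + pi) / 2 - (G (-pi) * g (-pi) + - pi) / 2)
      {-pi..pi}"
    by (rule has_integral_antiderivative_Icc) (simp_all add: pi_ge_zero)
  then have "((\<lambda>t. (g t)\<^sup>2) has_integral pi) {-pi..pi}"
    using \<open>G (-pi) = 0\<close> \<open>G pi = 0\<close> by simp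
  then have "((\<lambda>t. (a t)\<^sup>2) has_integral \<mu>\<^sup>2 * pi) {-pi..pi}"
    by (rule has_integral_eq[rotated, OF has_integral_mult_right])
      (simp add: a power_mult_distrib)
  then have int_a2: "integral {-pi..pi} (\<lambda>t. (a t)\<^sup>2) = \<mu>\<^sup>2 * pi"
    by (rule integral_unique)
  have a'_eq: "a' x = \<mu> * g' x" if x: "x \<in> {-pi..pi}" for x
  proof -
    have "(a has_real_derivative \<mu> * g' x) (at x within {-pi..pi})"
      by (rule has_field_derivative_transform_within[OF DERIV_cmult[OF g'[OF x]] zero_less_one x])
        (simp add: a)
    then show ?thesis
      using has_real_derivative_unique_Icc[OF _ x] a' x by (meson pi_gt_zero neg_less_pos)
  qed
  show ?thesis
    unfolding integro_ode_def
  proof (intro conjI ballI)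
    show "integral {-pi..pi} a = 0" using int_a[of pi] \<open>G pi = 0\<close> by simp
  next
    fix x assume x: "x \<in> {-pi..pi}"
    have "integral {-pi..x} a * a' x - (a x)\<^sup>2 + (1/pi) * integral {-pi..pi} (\<lambda>t. (a t)\<^sup>2)
        = \<mu>\<^sup>2 * (G x * g' x - (g x)\<^sup>2 + 1)"
      using int_a[OF x] a'_eq[OF x] int_a2 a[OF x] by (simp add: power2_eq_square algebra_simps)
    then show "integral {-pi..x} a * a' x - (a x)\<^sup>2
        + (1/pi) * integral {-pi..pi} (\<lambda>t. (a t)\<^sup>2) = 0"
      using normalized[OF x] by simp
  qed
qed

lemma integro_ode_cos:
  fixes a a' :: "real \<Rightarrow> real"
  assumes a': "\<forall>x\<in>{-pi..pi}. (a has_real_derivative a' x) (at x within {-pi..pi})"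
    and "k \<ge> 1" and a: "\<forall>x\<in>{-pi..pi}. a x = \<mu> * cos (real k * x)"
  shows "integro_ode a a'"
proof (rule integro_ode_multiple[where g' = "\<lambda>x. - real k * sin (real k * x)"
      and G = "\<lambda>x. sin (real k * x) / real k", OF a' a[rule_format]])
  have "real k \<noteq> 0" using \<open>k \<ge> 1\<close> by simp
  then show "((\<lambda>x. sin (real k * x) / real k) has_real_derivative cos (real k * x))
      (at x within {-pi..pi})" for x
    by (auto intro!: derivative_eq_intros)
  show "sin (real k * x) / real k * (- real k * sin (real k * x)) - (cos (real k * x))\<^sup>2 = -1"
    for x
    using \<open>real k \<noteq> 0\<close> sin_cos_squared_add[of "real k * x"] by (simp add: power2_eq_square)
qed (auto intro!: derivative_eq_intros)

lemma integro_ode_sin: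
  fixes a a' :: "real \<Rightarrow> real"
  assumes a': "\<forall>x\<in>{-pi..pi}. (a has_real_derivative a' x) (at x within {-pi..pi})"
    and a: "\<forall>x\<in>{-pi..pi}. a x = \<mu> * sin ((2 * real k + 1) / 2 * x)"
  shows "integro_ode a a'"
proof -
  define m where "m = (2 * real k + 1) / 2"
  have "m > 0" by (simp add: m_def)
  have "cos (m * pi) = 0"
    by (simp add: m_def add_divide_distrib distrib_right cos_add)
  show ?thesis
  proof (rule integro_ode_multiple[where g' = "\<lambda>x. m * cos (m * x)"
        and G = "\<lambda>x. - cos (m * x) / m", OF a'])
    show "((\<lambda>x. - cos (m * x) / m) has_real_derivative sin (m * x)) (at x within {-pi..pi})" for x
      using \<open>m > 0\<close> by (auto intro!: derivative_eq_intros)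
    show "- cos (m * x) / m * (m * cos (m * x)) - (sin (m * x))\<^sup>2 = -1" for x
      using \<open>m > 0\<close> sin_cos_squared_add[of "m * x"] by (simp add: power2_eq_square)
  qed (use a \<open>cos (m * pi) = 0\<close> in \<open>auto simp: m_def intro!: derivative_eq_intros\<close>)
qed

lemma integro_ode_mean_square:
  assumes "integro_ode a a'"
  shows "(1/pi) * integral {-pi..pi} (\<lambda>t. (a t)\<^sup>2) = (a (-pi))\<^sup>2"
  using assms pi_gt_zero unfolding integro_ode_def by (auto dest: bspec[of _ _ "-pi"])

lemma integro_ode_vanishing:
  fixes a a' :: "real \<Rightarrow> real"
  assumes a': "\<forall>x\<in>{-pi..pi}. (a has_real_derivative a' x) (at x within {-pi..pi})"
    and ode: "integro_ode a a'" and "a (-pi) = 0" and x: "x \<in> {-pi..pi}"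
  shows "a x = 0"
proof -
  have "integral {-pi..pi} (\<lambda>t. (a t)\<^sup>2) = 0"
    using integro_ode_mean_square[OF ode] \<open>a (-pi) = 0\<close> by simp
  moreover have "continuous_on {-pi..pi} (\<lambda>t. (a t)\<^sup>2)"
    using a' by (intro continuous_intros DERIV_continuous_on) auto
  ultimately have "(a x)\<^sup>2 = 0"
    using integral_eq_0_iff[of "-pi" pi "\<lambda>t. (a t)\<^sup>2"] pi_gt_zero x by auto
  then show ?thesis by simp
qed

lemma integro_ode_imp_proportional:
  fixes a a' :: "real \<Rightarrow> real"
  assumes C2: "C2_on {-pi..pi} a"
    and a': "\<forall>x\<in>{-pi..pi}. (a has_real_derivative a' x) (at x within {-pi..pi})"
    and ode: "integro_ode a a'" and "a (-pi) \<noteq> 0"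
  obtains L where "L < 0" "\<And>x. x \<in> {-pi..pi} \<Longrightarrow> a' x = L * integral {-pi..x} a"
proof -
  define A where "A x = integral {-pi..x} a" for x
  have "-pi < pi" by simp
  have a'_at: "\<And>x. x \<in> {-pi..pi} \<Longrightarrow> (a has_real_derivative a' x) (at x within {-pi..pi})"
    using a' by blast
  obtain a'' where
      a'': "\<And>x. x \<in> {-pi..pi} \<Longrightarrow> (a' has_real_derivative a'' x) (at x within {-pi..pi})"
    and "continuous_on {-pi..pi} a''"
    using C2_on_Icc_second_derivative[OF \<open>-pi < pi\<close> C2 a'_at] by blast
  have A': "(A has_real_derivative a x) (at x within {-pi..pi})" if "x \<in> {-pi..pi}" for x
    unfolding A_def[abs_def]
    by (rule integral_has_real_derivative[OF DERIV_continuous_on[OF a'_at] that])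
  have first_integral: "A x * a' x - (a x)\<^sup>2 + (a (-pi))\<^sup>2 = 0" if "x \<in> {-pi..pi}" for x
    using ode that unfolding integro_ode_mean_square[OF ode, symmetric] integro_ode_def A_def
    by blast
  have no_common_zero: "A x \<noteq> 0 \<or> a x \<noteq> 0" if "x \<in> {-pi..pi}" for x
    using first_integral[OF that] \<open>a (-pi) \<noteq> 0\<close> by auto
  have "A x * a'' x = a x * a' x" if "x \<in> {-pi..pi}" for x
    by (rule wronskian_zero_if_first_integral[OF \<open>-pi < pi\<close> A' a'_at a'' first_integral that])
  then obtain L where L: "\<And>x. x \<in> {-pi..pi} \<Longrightarrow> a' x = L * A x"
    using wronskian_zero_imp_proportional[OF A' a'' DERIV_continuous_on[OF a'_at]
        \<open>continuous_on {-pi..pi} a''\<close> _ no_common_zero] by blast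
  have "A (-pi) = A pi" using ode by (simp add: A_def integro_ode_def)
  have energy: "L * (A x)\<^sup>2 - (a x)\<^sup>2 + (a (-pi))\<^sup>2 = 0" if "x \<in> {-pi..pi}" for x
    using first_integral[OF that] L[OF that] by (simp add: power2_eq_square algebra_simps)
  have "L < 0"
    by (rule first_integral_imp_coeff_neg[of "-pi" pi A a L "(a (-pi))\<^sup>2"])
      (simp_all add: A' energy \<open>A (-pi) = A pi\<close> \<open>a (-pi) \<noteq> 0\<close>)
  show ?thesis using \<open>L < 0\<close> L unfolding A_def by (rule that)
qed

lemma integro_ode_imp_shifted_cos:
  fixes a a' :: "real \<Rightarrow> real"
  assumes C2: "C2_on {-pi..pi} a"
    and a': "\<forall>x\<in>{-pi..pi}. (a has_real_derivative a' x) (at x within {-pi..pi})"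
    and ode: "integro_ode a a'"
  obtains \<mu> :: real and n :: nat where "n \<ge> 1"
    and "\<And>x. x \<in> {-pi..pi} \<Longrightarrow> a x = \<mu> * cos (real n / 2 * (x + pi))"
proof (cases "a (-pi) = 0")
  case True
  then show ?thesis using integro_ode_vanishing[OF a' ode True] by (intro that[of 1 0]) auto
next
  case False
  define A where "A x = integral {-pi..x} a" for x
  obtain L where "L < 0" and L: "\<And>x. x \<in> {-pi..pi} \<Longrightarrow> a' x = L * A x"
    using integro_ode_imp_proportional[OF C2 a' ode False] unfolding A_def by blast
  define w where "w = sqrt (- L)"
  have "w > 0" "w\<^sup>2 = - L" using \<open>L < 0\<close> by (simp_all add: w_def)
  have A': "(A has_real_derivative a x) (at x within {-pi..pi})" if "x \<in> {-pi..pi}" for x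
    unfolding A_def[abs_def] using a' that
    by (intro integral_has_real_derivative DERIV_continuous_on) auto
  have a'_harmonic: "(a has_real_derivative - (w\<^sup>2 * A x)) (at x within {-pi..pi})"
    if "x \<in> {-pi..pi}" for x
    using a'[rule_format, OF that] L[OF that] \<open>w\<^sup>2 = - L\<close> by simp
  have "A (-pi) = 0" "A pi = 0" using ode by (simp_all add: A_def integro_ode_def)
  have "sin (w * (2 * pi)) = 0"
    using harmonic_oscillator_Icc(2)[OF A' a'_harmonic, of pi] \<open>A (-pi) = 0\<close> \<open>A pi = 0\<close> False
    by simp
  then obtain i :: int where "w * (2 * pi) = of_int i * pi" by (auto simp: sin_zero_iff_int2)
  then have "w = of_int i / 2" by (simp add: field_simps)
  with \<open>w > 0\<close> have w: "w = real (nat i) / 2" and "nat i \<ge> 1" by simp_all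
  show ?thesis
  proof (rule that[OF \<open>nat i \<ge> 1\<close>])
    fix x assume "x \<in> {-pi..pi}"
    then show "a x = a (-pi) * cos (real (nat i) / 2 * (x + pi))"
      using harmonic_oscillator_Icc(1)[OF A' a'_harmonic \<open>x \<in> {-pi..pi}\<close>] \<open>A (-pi) = 0\<close> w
      by simp
  qed
qed

lemma cos_nat_mult_shift_pi:
  "cos (real k * (x + pi)) = (-1) ^ k * cos (real k * x)"
  by (simp add: distrib_left cos_add)

lemma cos_odd_half_shift_pi:
  "cos ((2 * real k + 1) / 2 * (x + pi)) = - ((-1) ^ k * sin ((2 * real k + 1) / 2 * x))"
proof -
  have shift: "(2 * real k + 1) / 2 * (x + pi) = (2 * real k + 1) / 2 * x + (real k * pi + pi / 2)"
    by (simp add: field_simps)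
  have "cos (real k * pi + pi / 2) = 0" "sin (real k * pi + pi / 2) = (-1) ^ k"
    by (simp_all add: cos_add sin_add)
  then show ?thesis unfolding shift cos_add by simp
qed

lemma shifted_cos_cases:
  assumes "n \<ge> 1" and a: "\<And>x. x \<in> S \<Longrightarrow> a x = \<mu> * cos (real n / 2 * (x + pi))"
  shows "(\<exists>\<mu> k. k \<ge> 1 \<and> (\<forall>x\<in>S. a x = \<mu> * cos (real k * x)))
    \<or> (\<exists>\<mu> k. \<forall>x\<in>S. a x = \<mu> * sin ((2 * real k + 1) / 2 * x))"
proof (cases "even n")
  case True
  then obtain k where "n = 2 * k" by blast
  then have "real n / 2 = real k" by simp
  with a have "\<forall>x\<in>S. a x = (\<mu> * (-1) ^ k) * cos (real k * x)"
    by (simp add: cos_nat_mult_shift_pi)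
  moreover have "k \<ge> 1" using \<open>n \<ge> 1\<close> \<open>n = 2 * k\<close> by simp
  ultimately show ?thesis by blast
next
  case False
  then obtain k where "n = 2 * k + 1" using oddE by blast
  then have "real n / 2 = (2 * real k + 1) / 2" by simp
  with a have "\<forall>x\<in>S. a x = (- \<mu> * (-1) ^ k) * sin ((2 * real k + 1) / 2 * x)"
    by (simp only: cos_odd_half_shift_pi) simp
  then show ?thesis by blast
qed

theorem proposition2p1:
  fixes a a' :: "real \<Rightarrow> real"
  assumes C2: "C2_on {-pi..pi} a"
    and deriv: "\<forall>x\<in>{-pi..pi}. (a has_real_derivative a' x) (at x within {-pi..pi})"
  shows "(integral {-pi..pi} a = 0 \<and>
          (\<forall>x\<in>{-pi..pi}. integral {-pi..x} a * a' x - (a x)^2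
              + (1/pi) * integral {-pi..pi} (\<lambda>t. (a t)^2) = 0))
     \<longleftrightarrow> ((\<exists>\<mu>::real. \<exists>k::nat. k \<ge> 1 \<and> (\<forall>x\<in>{-pi..pi}. a x = \<mu> * cos (real k * x)))
        \<or> (\<exists>\<mu>::real. \<exists>k::nat. (\<forall>x\<in>{-pi..pi}. a x = \<mu> * sin ((2 * real k + 1) / 2 * x))))"
  unfolding integro_ode_def[symmetric]
proof
  assume "integro_ode a a'"
  then obtain \<mu> n where "n \<ge> 1"
    and "\<And>x. x \<in> {-pi..pi} \<Longrightarrow> a x = \<mu> * cos (real n / 2 * (x + pi))"
    using integro_ode_imp_shifted_cos[OF C2 deriv] by blast
  then show "(\<exists>\<mu> k. k \<ge> 1 \<and> (\<forall>x\<in>{-pi..pi}. a x = \<mu> * cos (real k * x)))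
    \<or> (\<exists>\<mu> k. \<forall>x\<in>{-pi..pi}. a x = \<mu> * sin ((2 * real k + 1) / 2 * x))"
    by (rule shifted_cos_cases)
next
  assume "(\<exists>\<mu> k. k \<ge> 1 \<and> (\<forall>x\<in>{-pi..pi}. a x = \<mu> * cos (real k * x)))
    \<or> (\<exists>\<mu> k. \<forall>x\<in>{-pi..pi}. a x = \<mu> * sin ((2 * real k + 1) / 2 * x))"
  then show "integro_ode a a'" using integro_ode_cos[OF deriv] integro_ode_sin[OF deriv] by blast
qed

end
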